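(* Let $G$ be a finite graph, let $C$ be a proper coloring of $G$ with exactly $\chi(G)$ colors, and let $C_1$ be one color class of $C$. Let $\mathcal{G}\le \mathrm{Aut}(G)$ be the subgroup of all automorphisms $A$ with $A(C_1)=C_1$ (setwise), and assume $|\mathcal{G}|\ge 2$; let $r$ be the least prime dividing $|\mathcal{G}|$. For $A\in\mathcal{G}$ let $\theta_A$ be the number of distinct orbits of the cyclic group $\langle A\rangle$ on $C_1$. If for some integer $t\ge 2$ $$\sum_{A\in\mathcal{G}} t^{\theta_A-|C_1|}<r,$$ then $\chi_D(G)\le \chi(G)+t-1$. In particular, with $F(C_1):=\max_{A\in\mathcal{G},\,A\neq I}|\{v\in C_1: A(v)=v\}|$, if $F(C_1)<|C_1|-2\log_t|\mathcal{G}|$ for some integer $t\ge2$, then $\chi_D(G)\le\chi(G)+t-1$.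
   Context: For a graph $G$, a coloring of $V(G)$ is distinguishing if the only automorphism of $G$ that maps every color class onto itself (setwise) is the identity. The distinguishing chromatic number $\chi_D(G)$ is the minimum number of colors in a coloring of $G$ that is both proper and distinguishing. $\chi(G)$ is the chromatic number. *)

theory Defs
  imports Complex_Main "HOL-Computational_Algebra.Primes"
begin

definition graph :: "'a set \<Rightarrow> ('a \<Rightarrow> 'a \<Rightarrow> bool) \<Rightarrow> bool" where
  "graph V E \<longleftrightarrow> finite V \<and> (\<forall>u v. E u v \<longrightarrow> u \<in> V \<and> v \<in> V)
     \<and> (\<forall>u v. E u v \<longrightarrow> E v u) \<and> (\<forall>u. \<not> E u u)"

definition aut :: "'a set \<Rightarrow> ('a \<Rightarrow> 'a \<Rightarrow> bool) \<Rightarrow> ('a \<Rightarrow> 'a) set" where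
  "aut V E = {f. bij_betw f V V \<and> (\<forall>x. x \<notin> V \<longrightarrow> f x = x)
     \<and> (\<forall>u\<in>V. \<forall>v\<in>V. E u v \<longleftrightarrow> E (f u) (f v))}"

definition proper_coloring :: "'a set \<Rightarrow> ('a \<Rightarrow> 'a \<Rightarrow> bool) \<Rightarrow> ('a \<Rightarrow> nat) \<Rightarrow> bool" where
  "proper_coloring V E c \<longleftrightarrow> (\<forall>u\<in>V. \<forall>v\<in>V. E u v \<longrightarrow> c u \<noteq> c v)"

definition color_class :: "'a set \<Rightarrow> ('a \<Rightarrow> nat) \<Rightarrow> nat \<Rightarrow> 'a set" where
  "color_class V c i = {v \<in> V. c v = i}"

definition num_colors :: "'a set \<Rightarrow> ('a \<Rightarrow> nat) \<Rightarrow> nat" where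
  "num_colors V c = card (c ` V)"

definition distinguishing :: "'a set \<Rightarrow> ('a \<Rightarrow> 'a \<Rightarrow> bool) \<Rightarrow> ('a \<Rightarrow> nat) \<Rightarrow> bool" where
  "distinguishing V E c \<longleftrightarrow>
     (\<forall>f \<in> aut V E. (\<forall>i \<in> c ` V. f ` color_class V c i = color_class V c i) \<longrightarrow> f = id)"

definition chromatic_number :: "'a set \<Rightarrow> ('a \<Rightarrow> 'a \<Rightarrow> bool) \<Rightarrow> nat" where
  "chromatic_number V E = (LEAST k. \<exists>c. proper_coloring V E c \<and> num_colors V c = k)"

definition dist_chromatic_number :: "'a set \<Rightarrow> ('a \<Rightarrow> 'a \<Rightarrow> bool) \<Rightarrow> nat" where
  "dist_chromatic_number V E =
     (LEAST k. \<exists>c. proper_coloring V E c \<and> distinguishing V E c \<and> num_colors V c = k)"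

definition num_orbits :: "('a \<Rightarrow> 'a) \<Rightarrow> 'a set \<Rightarrow> nat" where
  "num_orbits A S = card {{(A ^^ k) x | k. True} | x. x \<in> S}"

end

theory Submission
  imports Defs "HOL-Algebra.Coset" "HOL-Combinatorics.Orbits" "HOL-Combinatorics.Cycles"
begin

text \<open>
  Colour the class \<open>C1\<close> with \<open>t\<close> colours so that only the identity of \<open>\<G>\<close> preserves
  this colouring, and give the vertices of \<open>C1\<close> with a nonzero colour fresh colours above all
  colours of \<open>c\<close>. The result is proper, uses at most \<open>\<chi>(G) + t - 1\<close> colours, and an
  automorphism preserving its classes maps \<open>C1\<close> onto itself, hence lies in \<open>\<G>\<close> and is the
  identity.

  Such a colouring of \<open>C1\<close> exists by double counting the pairs \<open>(A, col)\<close> with \<open>A\<close> fixing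
  \<open>col\<close>. A colouring fixed by \<open>A\<close> is constant on the orbits of \<open>\<langle>A\<rangle>\<close>, so there are at most
  \<open>t^\<theta>\<^sub>A\<close> of them; the stabiliser of a colouring is a subgroup of \<open>\<G>\<close>, so by Lagrange
  it has order at least \<open>r\<close> unless it is trivial. If no stabiliser were trivial we would get
  \<open>r t^|C1| \<le> \<Sum>\<^sub>A t^\<theta>\<^sub>A\<close>, contrary to the hypothesis.

  For the second statement, orbits of size one are fixed points, so \<open>2\<theta>\<^sub>A \<le> |C1| + fix(A)\<close>;
  the bound on \<open>F(C1)\<close> then makes every non-identity term smaller than \<open>1/|\<G>|\<close>, and the
  whole sum is smaller than \<open>2 \<le> r\<close>.
\<close>

(* For n = 1 there is no prime divisor, and the value is unspecified. *)
definition least_prime_divisor :: "nat \<Rightarrow> nat" where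
  "least_prime_divisor n = (LEAST p. prime p \<and> p dvd n)"

lemma least_prime_divisor_le: "prime p \<Longrightarrow> p dvd n \<Longrightarrow> least_prime_divisor n \<le> p"
  unfolding least_prime_divisor_def by (simp add: Least_le)

lemma two_le_least_prime_divisor:
  assumes "n \<noteq> 1"
  shows "2 \<le> least_prime_divisor n"
proof -
  obtain p where "prime p \<and> p dvd n" using prime_factor_nat[OF assms] by blast
  then have "prime (least_prime_divisor n) \<and> least_prime_divisor n dvd n"
    unfolding least_prime_divisor_def by (rule LeastI)
  then show ?thesis using prime_ge_2_nat by blast
qed

lemma card_filter_eq_sum: "finite A \<Longrightarrow> card {x \<in> A. P x} = (\<Sum>x\<in>A. if P x then 1 else 0)"
  by (simp add: sum.inter_filter[symmetric])

lemma sum_card_filter_swap: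
  assumes "finite X" "finite Y"
  shows "(\<Sum>x\<in>X. card {y \<in> Y. P x y}) = (\<Sum>y\<in>Y. card {x \<in> X. P x y})"
  using assms by (simp add: card_filter_eq_sum sum.swap[of _ X Y])

section \<open>Orbits of a permutation on an invariant set\<close>

lemma num_orbits_eq_card_orbits: "permutation f \<Longrightarrow> num_orbits f S = card (orbit f ` S)"
  unfolding num_orbits_def by (simp add: orbit_altdef_permutation Setcompr_eq_image)

lemma orbit_subset_invariant_set:
  assumes "f ` S \<subseteq> S" "x \<in> S"
  shows "orbit f x \<subseteq> S"
proof
  fix y assume "y \<in> orbit f x"
  then show "y \<in> S" by induction (use assms in auto)
qed

lemma invariant_coloring_const_on_orbit:
  assumes "f ` S \<subseteq> S" "x \<in> S" "\<forall>v\<in>S. col (f v) = col v" "y \<in> orbit f x"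
  shows "col y = col x"
  using assms(4)
proof (induction rule: orbit.induct)
  case base
  show ?case using assms(2,3) by blast
next
  case (step y)
  then have "y \<in> S" using orbit_subset_invariant_set[OF assms(1,2)] by blast
  then show ?case using assms(3) step.IH by simp
qed

lemma card_invariant_colorings_le:
  assumes f: "permutation f" and fin: "finite S" "finite K" and inv: "f ` S \<subseteq> S"
  shows "card {col \<in> S \<rightarrow>\<^sub>E K. \<forall>v\<in>S. col (f v) = col v} \<le> card K ^ num_orbits f S"
    (is "card ?Inv \<le> _")
proof -
  define Orb where "Orb = orbit f ` S"
  define rep where "rep col = (\<lambda>Q\<in>Orb. col (SOME x. x \<in> Q))" for col :: "'a \<Rightarrow> 'b"
  have rep_in_orbit: "(SOME y. y \<in> orbit f x) \<in> orbit f x" for x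
    using permutation_self_in_orbit[OF f] by (rule someI)
  have "rep ` ?Inv \<subseteq> Orb \<rightarrow>\<^sub>E K"
    using rep_in_orbit orbit_subset_invariant_set[OF inv]
    by (fastforce simp: rep_def Orb_def PiE_iff)
  moreover have "inj_on rep ?Inv"
  proof (rule inj_onI)
    fix col1 col2 assume col: "col1 \<in> ?Inv" "col2 \<in> ?Inv" "rep col1 = rep col2"
    have "col1 v = col2 v" if v: "v \<in> S" for v
    proof -
      let ?s = "SOME y. y \<in> orbit f v"
      have "rep col1 (orbit f v) = rep col2 (orbit f v)" using col(3) by simp
      then have "col1 ?s = col2 ?s" using v by (simp add: rep_def Orb_def)
      moreover have "col1 ?s = col1 v"
        using col(1) by (intro invariant_coloring_const_on_orbit[OF inv v _ rep_in_orbit]) simp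
      moreover have "col2 ?s = col2 v"
        using col(2) by (intro invariant_coloring_const_on_orbit[OF inv v _ rep_in_orbit]) simp
      ultimately show "col1 v = col2 v" by simp
    qed
    then show "col1 = col2" using col(1,2) by (intro PiE_ext[of col1 S "\<lambda>_. K"]) auto
  qed
  ultimately have "card ?Inv \<le> card (Orb \<rightarrow>\<^sub>E K)"
    using fin by (intro card_inj_on_le) (auto simp: Orb_def finite_PiE)
  also have "\<dots> = card K ^ num_orbits f S"
    using fin f by (simp add: card_PiE Orb_def num_orbits_eq_card_orbits)
  finally show ?thesis .
qed

lemma card_eq_sum_card_orbits:
  assumes f: "permutation f" and fin: "finite S" and inv: "f ` S \<subseteq> S"
  shows "card S = (\<Sum>Q\<in>orbit f ` S. card Q)"
proof -
  have finite_orbit: "finite Q" if "Q \<in> orbit f ` S" for Q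
  proof -
    have "Q \<subseteq> S" using that orbit_subset_invariant_set[OF inv] by auto
    then show ?thesis using fin by (rule finite_subset)
  qed
  have orbit_eq: "y \<in> orbit f x \<Longrightarrow> orbit f y = orbit f x" for x y
    by (rule orbit_cyclic_eq3[OF cyclic_on_orbit'[OF f]])
  have disjoint: "pairwise disjnt (orbit f ` S)"
  proof (rule pairwiseI)
    fix P Q assume "P \<in> orbit f ` S" "Q \<in> orbit f ` S" "P \<noteq> Q"
    then obtain x y where xy: "P = orbit f x" "Q = orbit f y" by auto
    have "P = orbit f z \<and> Q = orbit f z" if "z \<in> P \<inter> Q" for z
      using that orbit_eq[of z x] orbit_eq[of z y] xy by auto
    then show "disjnt P Q" using \<open>P \<noteq> Q\<close> by (auto simp: disjnt_def)
  qed
  have "\<Union>(orbit f ` S) = S"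
    using orbit_subset_invariant_set[OF inv] permutation_self_in_orbit[OF f] by auto
  then show ?thesis using card_Union_disjoint[OF disjoint finite_orbit] by simp
qed

lemma two_num_orbits_le:
  assumes f: "permutation f" and fin: "finite S" and inv: "f ` S \<subseteq> S"
  shows "2 * num_orbits f S \<le> card S + card {v \<in> S. f v = v}"
proof -
  define Orb where "Orb = orbit f ` S"
  have "{Q \<in> Orb. card Q = 1} \<subseteq> orbit f ` {v \<in> S. f v = v}"
  proof
    fix Q assume "Q \<in> {Q \<in> Orb. card Q = 1}"
    then obtain x where x: "x \<in> S" "Q = orbit f x" "card Q = 1" by (auto simp: Orb_def)
    obtain y where "Q = {y}" using x(3) by (rule card_1_singletonE)
    moreover have "x \<in> Q" using x(2) permutation_self_in_orbit[OF f] by simp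
    ultimately have "orbit f x = {x}" using x(2) by simp
    then have "f x = x" by (simp only: orbit_eq_singleton_iff)
    then show "Q \<in> orbit f ` {v \<in> S. f v = v}" using x(1,2) by blast
  qed
  then have "card {Q \<in> Orb. card Q = 1} \<le> card (orbit f ` {v \<in> S. f v = v})"
    using fin by (intro card_mono) auto
  also have "\<dots> \<le> card {v \<in> S. f v = v}"
    using fin by (intro card_image_le) auto
  finally have card_singletons: "card {Q \<in> Orb. card Q = 1} \<le> card {v \<in> S. f v = v}" .
  have "2 * card Orb = (\<Sum>Q\<in>Orb. 2)" by simp
  also have "\<dots> \<le> (\<Sum>Q\<in>Orb. card Q + (if card Q = 1 then 1 else 0))"
  proof (rule sum_mono)
    fix Q assume "Q \<in> Orb"
    then have "Q \<noteq> {}" "Q \<subseteq> S"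
      using permutation_self_in_orbit[OF f] orbit_subset_invariant_set[OF inv] by (auto simp: Orb_def)
    then have "0 < card Q" using fin by (simp add: card_gt_0_iff finite_subset)
    then show "2 \<le> card Q + (if card Q = 1 then 1 else 0)" by (cases "card Q = 1") simp_all
  qed
  also have "\<dots> = card S + card {Q \<in> Orb. card Q = 1}"
    using fin card_eq_sum_card_orbits[OF f fin inv]
    by (simp add: Orb_def sum.distrib card_filter_eq_sum)
  finally show ?thesis
    using card_singletons f by (simp add: num_orbits_eq_card_orbits Orb_def)
qed

section \<open>Groups of permutations under composition\<close>

definition comp_monoid :: "('a \<Rightarrow> 'a) set \<Rightarrow> ('a \<Rightarrow> 'a) monoid" where
  "comp_monoid F = \<lparr>carrier = F, mult = (\<circ>), one = id\<rparr>"

lemma funpow_in_comp_closed: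
  assumes "id \<in> F" "\<And>f g. f \<in> F \<Longrightarrow> g \<in> F \<Longrightarrow> f \<circ> g \<in> F" "f \<in> F"
  shows "f ^^ k \<in> F"
proof (induction k)
  case (Suc k)
  show ?case unfolding funpow_Suc_right by (rule assms(2)[OF Suc.IH assms(3)])
next
  case 0
  have "f ^^ 0 = id" by (simp add: fun_eq_iff)
  then show ?case using assms(1) by (simp only:)
qed

lemma group_comp_monoid:
  assumes "id \<in> F" "\<And>f g. f \<in> F \<Longrightarrow> g \<in> F \<Longrightarrow> f \<circ> g \<in> F"
    "\<And>f. f \<in> F \<Longrightarrow> permutation f"
  shows "group (comp_monoid F)"
proof (rule groupI)
  fix f assume f: "f \<in> carrier (comp_monoid F)"
  obtain n where n: "f ^^ n = id" "n > 0"
    using f assms(3) permutation_is_nilpotent by (auto simp: comp_monoid_def)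
  have "f ^^ (n - 1) \<circ> f = id" using n funpow_Suc_right[of "n - 1" f] by simp
  moreover have "f ^^ (n - 1) \<in> F"
    using f funpow_in_comp_closed[OF assms(1,2)] by (simp add: comp_monoid_def)
  ultimately show "\<exists>g\<in>carrier (comp_monoid F). g \<otimes>\<^bsub>comp_monoid F\<^esub> f = \<one>\<^bsub>comp_monoid F\<^esub>"
    by (auto simp: comp_monoid_def)
qed (auto simp: comp_monoid_def assms)

lemma card_dvd_card_of_comp_closed:
  assumes "id \<in> F" "\<And>f g. f \<in> F \<Longrightarrow> g \<in> F \<Longrightarrow> f \<circ> g \<in> F"
    "\<And>f. f \<in> F \<Longrightarrow> permutation f"
    and "H \<subseteq> F" "id \<in> H" "\<And>f g. f \<in> H \<Longrightarrow> g \<in> H \<Longrightarrow> f \<circ> g \<in> H"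
  shows "card H dvd card F"
proof -
  have group_F: "group (comp_monoid F)" by (rule group_comp_monoid[OF assms(1-3)])
  have "group (comp_monoid H)" using group_comp_monoid[of H] assms(3-6) by blast
  moreover have "comp_monoid H = (comp_monoid F)\<lparr>carrier := H\<rparr>" by (simp add: comp_monoid_def)
  ultimately have "subgroup H (comp_monoid F)"
    using assms(4) by (intro group.group_incl_imp_subgroup[OF group_F]) (simp_all add: comp_monoid_def)
  then obtain k where "k * card H = card F"
    using group.lagrange[OF group_F] by (auto simp: order_def comp_monoid_def)
  then show ?thesis by (metis dvd_triv_right)
qed

locale setwise_perm_group =
  fixes G :: "('a \<Rightarrow> 'a) set" and S :: "'a set"
  assumes finite_G: "finite G"
    and finite_S: "finite S"
    and id_in: "id \<in> G"
    and comp_in: "f \<in> G \<Longrightarrow> g \<in> G \<Longrightarrow> f \<circ> g \<in> G"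
    and permutation: "f \<in> G \<Longrightarrow> permutation f"
    and image_eq: "f \<in> G \<Longrightarrow> f ` S = S"
begin

definition stabilizer :: "('a \<Rightarrow> 'b) \<Rightarrow> ('a \<Rightarrow> 'a) set" where
  "stabilizer col = {f \<in> G. \<forall>v\<in>S. col (f v) = col v}"

lemma id_in_stabilizer: "id \<in> stabilizer col"
  by (simp add: stabilizer_def id_in)

lemma card_stabilizer_dvd: "card (stabilizer col) dvd card G"
proof (rule card_dvd_card_of_comp_closed[OF id_in comp_in permutation])
  show "f \<circ> g \<in> stabilizer col" if "f \<in> stabilizer col" "g \<in> stabilizer col" for f g
  proof -
    have "g v \<in> S" if "v \<in> S" for v
      using that image_eq \<open>g \<in> stabilizer col\<close> by (auto simp: stabilizer_def)
    then show ?thesis using that comp_in by (auto simp: stabilizer_def)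
  qed
qed (auto simp: stabilizer_def id_in)

lemma least_prime_divisor_le_card_stabilizer:
  assumes "stabilizer col \<noteq> {id}"
  shows "least_prime_divisor (card G) \<le> card (stabilizer col)"
proof -
  have finite: "finite (stabilizer col)" using finite_G by (simp add: stabilizer_def)
  obtain f where "f \<in> stabilizer col" "f \<noteq> id" using assms id_in_stabilizer by blast
  then have "card {id, f} \<le> card (stabilizer col)"
    using id_in_stabilizer by (intro card_mono[OF finite]) auto
  then have "2 \<le> card (stabilizer col)" using \<open>f \<noteq> id\<close> by simp
  then obtain p where p: "prime p" "p dvd card (stabilizer col)"
    using prime_factor_nat[of "card (stabilizer col)"] by auto
  then have "least_prime_divisor (card G) \<le> p"
    using card_stabilizer_dvd dvd_trans least_prime_divisor_le by blast
  also have "p \<le> card (stabilizer col)" using p(2) \<open>2 \<le> card (stabilizer col)\<close> by (simp add: dvd_imp_le)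
  finally show ?thesis .
qed

theorem exists_coloring_with_trivial_stabilizer:
  assumes t: "0 < t"
    and sum_lt: "(\<Sum>f\<in>G. real t powi (int (num_orbits f S) - int (card S)))
                   < real (least_prime_divisor (card G))"
  shows "\<exists>col \<in> S \<rightarrow>\<^sub>E {..<t}. stabilizer col = {id}"
proof (rule ccontr)
  define r where "r = least_prime_divisor (card G)"
  define Cols where "Cols = S \<rightarrow>\<^sub>E {..<t}"
  assume "\<not> ?thesis"
  then have r_le: "r \<le> card (stabilizer col)" if "col \<in> Cols" for col
    using that least_prime_divisor_le_card_stabilizer by (auto simp: r_def Cols_def)
  have power_split: "real t ^ k = real t powi (int k - int (card S)) * real t ^ card S" for k
  proof -
    have "real t powi int k = real t powi ((int k - int (card S)) + int (card S))" by simp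
    also have "\<dots> = real t powi (int k - int (card S)) * real t powi int (card S)"
      using t by (intro power_int_add) simp
    finally show ?thesis by (simp add: power_int_of_nat)
  qed
  have "r * t ^ card S = (\<Sum>col\<in>Cols. r)"
    using finite_S by (simp add: Cols_def card_PiE)
  also have "\<dots> \<le> (\<Sum>col\<in>Cols. card (stabilizer col))"
    by (rule sum_mono) (rule r_le)
  also have "\<dots> = (\<Sum>f\<in>G. card {col \<in> Cols. \<forall>v\<in>S. col (f v) = col v})"
    unfolding stabilizer_def
    by (rule sum_card_filter_swap[symmetric]) (simp_all add: finite_G finite_S Cols_def finite_PiE)
  also have "\<dots> \<le> (\<Sum>f\<in>G. t ^ num_orbits f S)"
    unfolding Cols_def
    by (rule sum_mono) (use card_invariant_colorings_le[OF permutation finite_S] image_eq in fastforce)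
  finally have "real (r * t ^ card S) \<le> real (\<Sum>f\<in>G. t ^ num_orbits f S)"
    by (simp only: of_nat_le_iff)
  then have "real r * real t ^ card S \<le> (\<Sum>f\<in>G. real t ^ num_orbits f S)"
    by (simp only: of_nat_mult of_nat_power of_nat_sum)
  also have "\<dots> = (\<Sum>f\<in>G. real t powi (int (num_orbits f S) - int (card S))) * real t ^ card S"
    unfolding sum_distrib_right by (intro sum.cong refl power_split)
  also have "\<dots> < real r * real t ^ card S"
    using sum_lt t by (intro mult_strict_right_mono) (simp_all add: r_def)
  finally show False by simp
qed

lemma sum_powi_num_orbits_lt_least_prime_divisor:
  fixes t :: real
  assumes t: "1 < t" and card_G: "2 \<le> card G"
    and fixed_points: "real (Max {card {v \<in> S. f v = v} | f. f \<in> G \<and> f \<noteq> id})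
                         < real (card S) - 2 * log t (real (card G))"
  shows "(\<Sum>f\<in>G. t powi (int (num_orbits f S) - int (card S))) < real (least_prime_divisor (card G))"
proof -
  define g where "g = real (card G)"
  define T where "T f = t powi (int (num_orbits f S) - int (card S))" for f
  have g: "2 \<le> g" using card_G by (simp add: g_def)
  have T_powr: "T f = t powr (real (num_orbits f S) - real (card S))" for f
    using t by (simp add: T_def powr_real_of_int'[symmetric])
  have T_small: "T f < 1 / g" if f: "f \<in> G" "f \<noteq> id" for f
  proof -
    have "finite {card {v \<in> S. f v = v} | f. f \<in> G \<and> f \<noteq> id}"
      using finite_G by simp
    then have "card {v \<in> S. f v = v} \<le> Max {card {v \<in> S. f v = v} | f. f \<in> G \<and> f \<noteq> id}"
      by (rule Max_ge) (use f in blast)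
    moreover have "2 * num_orbits f S \<le> card S + card {v \<in> S. f v = v}"
      using image_eq[OF f(1)] by (intro two_num_orbits_le[OF permutation[OF f(1)] finite_S]) simp
    ultimately have "real (num_orbits f S) - real (card S) < - log t g"
      using fixed_points unfolding g_def by linarith
    then have "T f < t powr (- log t g)"
      unfolding T_powr using t by (simp only: powr_less_cancel_iff)
    also have "\<dots> = 1 / g" using t g by (simp add: powr_minus_divide)
    finally show ?thesis .
  qed
  have "num_orbits id S \<le> card S"
    using finite_S by (simp add: num_orbits_eq_card_orbits card_image_le)
  then have "t powr (real (num_orbits id S) - real (card S)) \<le> t powr 0"
    using t by (simp only: powr_le_cancel_iff)
  then have T_id: "T id \<le> 1" using t by (simp add: T_powr)
  have "G - {id} \<noteq> {}"
  proof
    assume "G - {id} = {}"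
    then have "G = {id}" using id_in by blast
    then show False using card_G by simp
  qed
  have "(\<Sum>f\<in>G - {id}. T f) < (\<Sum>f\<in>G - {id}. 1 / g)"
    using finite_G \<open>G - {id} \<noteq> {}\<close> T_small by (intro sum_strict_mono) auto
  also have "\<dots> = (g - 1) / g"
    using finite_G id_in card_G by (simp add: card_Diff_singleton g_def of_nat_diff)
  finally have T_rest: "(\<Sum>f\<in>G - {id}. T f) < (g - 1) / g" .
  have "(\<Sum>f\<in>G. T f) = T id + (\<Sum>f\<in>G - {id}. T f)"
    using finite_G id_in by (rule sum.remove)
  also have "\<dots> < 1 + (g - 1) / g"
    by (rule add_le_less_mono[OF T_id T_rest])
  also have "\<dots> < 2" using g by (simp add: field_simps)
  also have "2 \<le> real (least_prime_divisor (card G))"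
    using two_le_least_prime_divisor[of "card G"] card_G by simp
  finally show ?thesis by (simp add: T_def)
qed

end

section \<open>Automorphisms and the refined colouring\<close>

lemma aut_permutes: "f \<in> aut V E \<Longrightarrow> f permutes V"
  by (auto simp: aut_def intro: bij_imp_permutes)

lemma id_in_aut: "id \<in> aut V E"
  by (simp add: aut_def)

lemma comp_in_aut:
  assumes "f \<in> aut V E" "g \<in> aut V E"
  shows "f \<circ> g \<in> aut V E"
proof -
  have f: "bij_betw f V V" "\<And>x. x \<notin> V \<Longrightarrow> f x = x"
    "\<And>u v. u \<in> V \<Longrightarrow> v \<in> V \<Longrightarrow> E u v \<longleftrightarrow> E (f u) (f v)"
    using assms(1) unfolding aut_def by blast+
  have g: "bij_betw g V V" "\<And>x. x \<notin> V \<Longrightarrow> g x = x"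
    "\<And>u v. u \<in> V \<Longrightarrow> v \<in> V \<Longrightarrow> E u v \<longleftrightarrow> E (g u) (g v)"
    using assms(2) unfolding aut_def by blast+
  have "E u v \<longleftrightarrow> E (f (g u)) (f (g v))" if "u \<in> V" "v \<in> V" for u v
    using g(3)[OF that] f(3)[OF bij_betw_apply[OF g(1) that(1)] bij_betw_apply[OF g(1) that(2)]]
    by simp
  then show ?thesis
    unfolding aut_def using bij_betw_trans[OF g(1) f(1)] f(2) g(2) by simp
qed

lemma setwise_perm_group_aut:
  assumes "finite V" "C \<subseteq> V"
  shows "setwise_perm_group {f \<in> aut V E. f ` C = C} C"
proof
  let ?G = "{f \<in> aut V E. f ` C = C}"
  have "?G \<subseteq> {p. p permutes V}" using aut_permutes by blast
  then show "finite ?G" using finite_permutations[OF assms(1)] by (rule finite_subset)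
  show "finite C" using assms(2,1) by (rule finite_subset)
  show "id \<in> ?G" using id_in_aut[of V E] by (simp only: mem_Collect_eq image_id id_apply)
  show "f \<circ> g \<in> ?G" if f: "f \<in> ?G" and g: "g \<in> ?G" for f g
  proof -
    have "(f \<circ> g) ` C = f ` (g ` C)" by (rule image_comp[symmetric])
    also have "\<dots> = C" using f g by (simp only: mem_Collect_eq)
    finally have "(f \<circ> g) ` C = C" .
    moreover have "f \<circ> g \<in> aut V E" using f g by (intro comp_in_aut) simp_all
    ultimately show ?thesis by (simp only: mem_Collect_eq)
  qed
  show "permutation f" if "f \<in> ?G" for f
    using that aut_permutes[of f V E] by (intro permutes_imp_permutation[OF assms(1)]) simp
  show "f ` C = C" if "f \<in> ?G" for f
    using that by simp
qed

definition refine_color_class :: "'a set \<Rightarrow> ('a \<Rightarrow> nat) \<Rightarrow> nat \<Rightarrow> ('a \<Rightarrow> nat) \<Rightarrow> 'a \<Rightarrow> nat" where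
  "refine_color_class V c i col v =
     (if v \<in> color_class V c i \<and> col v \<noteq> 0 then Max (c ` V) + col v else c v)"

lemma mem_color_class_iff_refine_color_class:
  assumes "finite V" "v \<in> V"
  shows "v \<in> color_class V c i \<longleftrightarrow>
           refine_color_class V c i col v = i \<or> Max (c ` V) < refine_color_class V c i col v"
  using Max_ge[OF finite_imageI[OF assms(1)] imageI[OF assms(2)], of c] assms(2)
  by (auto simp: refine_color_class_def color_class_def)

lemma proper_coloring_refine_color_class:
  assumes "finite V" "proper_coloring V E c"
  shows "proper_coloring V E (refine_color_class V c i col)"
  unfolding proper_coloring_def
proof (intro ballI impI)
  let ?C = "color_class V c i" and ?c' = "refine_color_class V c i col"
  fix u v assume uv: "u \<in> V" "v \<in> V" "E u v"
  then have "c u \<noteq> c v" using assms(2) by (auto simp: proper_coloring_def)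
  then have "u \<notin> ?C \<or> v \<notin> ?C" by (auto simp: color_class_def)
  then consider "u \<in> ?C" "v \<notin> ?C" | "u \<notin> ?C" "v \<in> ?C" | "u \<notin> ?C" "v \<notin> ?C" by blast
  then show "?c' u \<noteq> ?c' v"
  proof cases
    case 3
    then show ?thesis using \<open>c u \<noteq> c v\<close> by (simp add: refine_color_class_def)
  qed (use mem_color_class_iff_refine_color_class[OF assms(1)] uv in metis)+
qed

lemma num_colors_refine_color_class_le:
  assumes "finite V" "col ` color_class V c i \<subseteq> {..<t}" "0 < t"
  shows "num_colors V (refine_color_class V c i col) \<le> num_colors V c + t - 1"
proof -
  define M where "M = Max (c ` V)"
  have "refine_color_class V c i col ` V \<subseteq> c ` V \<union> {M + 1..<M + t}"
    using assms(2) by (auto simp: refine_color_class_def M_def)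
  then have "num_colors V (refine_color_class V c i col) \<le> card (c ` V \<union> {M + 1..<M + t})"
    unfolding num_colors_def using assms(1) by (intro card_mono) auto
  also have "\<dots> \<le> num_colors V c + (t - 1)"
    unfolding num_colors_def using card_Un_le by (rule order_trans) simp
  finally show ?thesis using assms(3) by simp
qed

lemma distinguishing_refine_color_class:
  assumes fin: "finite V"
    and trivial: "\<And>f. f \<in> aut V E \<Longrightarrow> f ` color_class V c i = color_class V c i \<Longrightarrow>
                   (\<forall>v \<in> color_class V c i. col (f v) = col v) \<Longrightarrow> f = id"
  shows "distinguishing V E (refine_color_class V c i col)"
  unfolding distinguishing_def
proof (intro ballI impI)
  let ?C = "color_class V c i" and ?c' = "refine_color_class V c i col" and ?M = "Max (c ` V)"
  fix f assume f: "f \<in> aut V E"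
    and classes: "\<forall>j \<in> ?c' ` V. f ` color_class V ?c' j = color_class V ?c' j"
  have same_color: "f v \<in> V \<and> ?c' (f v) = ?c' v" if "v \<in> V" for v
  proof -
    have "v \<in> color_class V ?c' (?c' v)" using that by (simp add: color_class_def)
    then have "f v \<in> f ` color_class V ?c' (?c' v)" by (rule imageI)
    also have "\<dots> = color_class V ?c' (?c' v)" using classes that by blast
    finally show ?thesis by (simp add: color_class_def)
  qed
  have C_V: "?C \<subseteq> V" by (auto simp: color_class_def)
  have f_in_C: "f v \<in> ?C" if "v \<in> ?C" for v
  proof -
    have v: "v \<in> V" using that C_V by blast
    then have "?c' v = i \<or> ?M < ?c' v"
      using that mem_color_class_iff_refine_color_class[OF fin] by blast
    then show ?thesis
      using same_color[OF v] mem_color_class_iff_refine_color_class[OF fin, of "f v" c i col] by simp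
  qed
  have "inj_on f ?C"
    using f C_V by (auto simp: aut_def intro: inj_on_subset bij_betw_imp_inj_on)
  then have f_C: "f ` ?C = ?C"
    using f_in_C finite_subset[OF C_V fin] by (intro endo_inj_surj) auto
  have "col (f v) = col v" if v: "v \<in> ?C" for v
  proof -
    have refined: "?c' w = (if col w = 0 then i else ?M + col w)" if "w \<in> ?C" for w
      using that by (simp add: refine_color_class_def color_class_def)
    have "v \<in> V" "c v = i" using v by (simp_all add: color_class_def)
    then have "i \<le> ?M" using Max_ge[OF finite_imageI[OF fin] imageI] by blast
    moreover have "?c' (f v) = ?c' v" using same_color v C_V by blast
    ultimately show ?thesis
      using refined[OF v] refined[OF f_in_C[OF v]] by (cases "col v = 0"; cases "col (f v) = 0") simp_all
  qed
  then show "f = id" using trivial f f_C by blast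
qed

lemma dist_chromatic_number_le_refine_color_class:
  assumes "finite V" "proper_coloring V E c" "col ` color_class V c i \<subseteq> {..<t}" "0 < t"
    and "\<And>f. f \<in> aut V E \<Longrightarrow> f ` color_class V c i = color_class V c i \<Longrightarrow>
                   (\<forall>v \<in> color_class V c i. col (f v) = col v) \<Longrightarrow> f = id"
  shows "dist_chromatic_number V E \<le> num_colors V c + t - 1"
proof -
  let ?c' = "refine_color_class V c i col"
  have "dist_chromatic_number V E \<le> num_colors V ?c'"
    unfolding dist_chromatic_number_def
    using proper_coloring_refine_color_class[OF assms(1,2)] distinguishing_refine_color_class[OF assms(1,5)]
    by (intro Least_le) blast
  also have "\<dots> \<le> num_colors V c + t - 1"
    by (rule num_colors_refine_color_class_le[OF assms(1,3,4)])
  finally show ?thesis .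
qed

theorem mainTheorem1:
  fixes V :: "'a set" and E :: "'a \<Rightarrow> 'a \<Rightarrow> bool" and c :: "'a \<Rightarrow> nat" and i :: nat
  assumes "graph V E"
    and "proper_coloring V E c"
    and "num_colors V c = chromatic_number V E"
    and "i \<in> c ` V"
  defines "C1 \<equiv> color_class V c i"
  defines "\<G> \<equiv> {A \<in> aut V E. A ` C1 = C1}"
  defines "r \<equiv> LEAST p::nat. prime p \<and> p dvd card \<G>"
  assumes "card \<G> \<ge> 2"
  shows "(\<forall>t::nat. t \<ge> 2 \<longrightarrow>
            (\<Sum>A\<in>\<G>. real t powi (int (num_orbits A C1) - int (card C1))) < real r \<longrightarrow>
            dist_chromatic_number V E \<le> chromatic_number V E + t - 1)
       \<and> (\<forall>t::nat. t \<ge> 2 \<longrightarrow>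
            real (Max {card {v \<in> C1. A v = v} | A. A \<in> \<G> \<and> A \<noteq> id})
              < real (card C1) - 2 * log (real t) (real (card \<G>)) \<longrightarrow>
            dist_chromatic_number V E \<le> chromatic_number V E + t - 1)"
proof -
  have fin: "finite V" using assms(1) by (simp add: graph_def)
  interpret setwise_perm_group \<G> C1
    unfolding \<G>_def by (rule setwise_perm_group_aut[OF fin]) (simp add: C1_def color_class_def)
  have r: "r = least_prime_divisor (card \<G>)" by (simp add: r_def least_prime_divisor_def)
  have sum_bound: "dist_chromatic_number V E \<le> chromatic_number V E + t - 1"
    if "2 \<le> t" "(\<Sum>A\<in>\<G>. real t powi (int (num_orbits A C1) - int (card C1))) < real r" for t
  proof -
    have "0 < t" "(\<Sum>A\<in>\<G>. real t powi (int (num_orbits A C1) - int (card C1)))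
                    < real (least_prime_divisor (card \<G>))"
      using that r by simp_all
    then obtain col where col: "col \<in> C1 \<rightarrow>\<^sub>E {..<t}" "stabilizer col = {id}"
      using exists_coloring_with_trivial_stabilizer by blast
    have "f = id" if "f \<in> aut V E" "f ` C1 = C1" "\<forall>v\<in>C1. col (f v) = col v" for f
    proof -
      have "f \<in> stabilizer col" using that unfolding stabilizer_def unfolding \<G>_def by blast
      then show ?thesis using col(2) by blast
    qed
    moreover have "col ` C1 \<subseteq> {..<t}" using col(1) by auto
    ultimately have "dist_chromatic_number V E \<le> num_colors V c + t - 1"
      using dist_chromatic_number_le_refine_color_class[OF fin assms(2),
          where i = i and col = col and t = t, folded C1_def] that(1)
      by simp
    then show ?thesis by (simp only: assms(3))
  qed
  moreover have "dist_chromatic_number V E \<le> chromatic_number V E + t - 1"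
    if "2 \<le> t" "real (Max {card {v \<in> C1. A v = v} | A. A \<in> \<G> \<and> A \<noteq> id})
                     < real (card C1) - 2 * log (real t) (real (card \<G>))" for t :: nat
  proof -
    have "(\<Sum>A\<in>\<G>. real t powi (int (num_orbits A C1) - int (card C1))) < real r"
      using sum_powi_num_orbits_lt_least_prime_divisor[of "real t"] that assms(8) r by simp
    then show ?thesis by (rule sum_bound[OF that(1)])
  qed
  ultimately show ?thesis by blast
qed

end
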